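(* (a) For every integer $n\ge 2$, $\mathrm{spt}2_d(n)=2p_d(n-1)-p_d(n)$. (b) For every integer $n\ge 4$, $\mathrm{spt}3_d(n)=2p_d(n-3)-2p_d(n-1)+p_d(n)$.
   Context: $\mathrm{spt}k_d(n)$ is the number of partitions of $n$ in which the smallest part occurs exactly $k$ times and all remaining parts (those larger than the smallest part) are pairwise distinct. $p_d(n)$ is the number of partitions of $n$ into distinct parts, with $p_d(0)=1$. *)

theory Defs
  imports Main "HOL-Library.Multiset"
begin

definition partitions :: "nat \<Rightarrow> nat multiset set" where
  "partitions n = {M. (\<forall>x \<in># M. 0 < x) \<and> sum_mset M = n}"

definition p_d :: "nat \<Rightarrow> nat" where
  "p_d n = card {M \<in> partitions n. \<forall>x. count M x \<le> 1}"

definition sptk_d :: "nat \<Rightarrow> nat \<Rightarrow> nat" where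
  "sptk_d k n = card {M \<in> partitions n. M \<noteq> {#} \<and>
      count M (Min (set_mset M)) = k \<and>
      (\<forall>x. x \<noteq> Min (set_mset M) \<longrightarrow> count M x \<le> 1)}"

end

theory Submission
  imports Defs
begin

text \<open>
  Write q m n for the number of partitions of n into distinct parts all exceeding m, so that
  p_d n = q 0 n. Removing the k copies of the smallest part m gives
  spt_k n = \<Sum>_{m \<ge> 1} q m (n - k m), and sorting by whether the part m occurs gives
  q (m - 1) N = q m N + q m (N - m). Applied with N = n - k m, term by term, this yields
  spt_(k+1) n + spt_k n = p_d (n - k) + spt_k (n - k) for 1 \<le> k \<le> n, the term m = 1 on the
  right supplying p_d (n - k). Since spt_1 n = p_d n for n > 0, the cases k = 1 and k = 2
  give (a) and (b).
\<close>

definition distinct_partitions_above :: "nat \<Rightarrow> nat \<Rightarrow> nat multiset set" where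
  "distinct_partitions_above m n =
     {M. (\<forall>x\<in>#M. m < x) \<and> (\<forall>x. count M x \<le> 1) \<and> sum_mset M = n}"

definition p_d_above :: "nat \<Rightarrow> nat \<Rightarrow> nat" where
  "p_d_above m n = card (distinct_partitions_above m n)"

lemma member_le_sum_mset: "x \<in># (M::nat multiset) \<Longrightarrow> x \<le> sum_mset M"
  by (metis le_add1 sum_mset.remove)

lemma finite_distinct_partitions_above: "finite (distinct_partitions_above m n)"
proof (rule finite_subset)
  have "M = mset_set (set_mset M) \<and> set_mset M \<subseteq> {..n}"
    if "M \<in> distinct_partitions_above m n" for M
    using that unfolding distinct_partitions_above_def
    by (auto intro!: multiset_eqI simp: count_mset_set' not_in_iff member_le_sum_mset le_antisym)
  then show "distinct_partitions_above m n \<subseteq> mset_set ` Pow {..n}"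
    by blast
qed simp

lemma p_d_eq_p_d_above_0: "p_d n = p_d_above 0 n"
  unfolding p_d_def p_d_above_def distinct_partitions_above_def partitions_def
  by (rule arg_cong[where f = card]) auto

lemma distinct_partitions_above_Suc_split:
  "distinct_partitions_above j n = distinct_partitions_above (Suc j) n \<union>
     (if Suc j \<le> n then add_mset (Suc j) ` distinct_partitions_above (Suc j) (n - Suc j) else {})"
  (is "?D = ?D' \<union> ?E")
proof (intro equalityI subsetI)
  fix M assume "M \<in> ?D"
  then have parts: "\<forall>x\<in>#M. j < x" and distinct: "\<forall>x. count M x \<le> 1" and sum: "sum_mset M = n"
    unfolding distinct_partitions_above_def by auto
  show "M \<in> ?D' \<union> ?E"
  proof (cases "Suc j \<in># M")
    case False
    with parts have "\<forall>x\<in>#M. Suc j < x"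
      by (metis Suc_lessI)
    with distinct sum show ?thesis
      unfolding distinct_partitions_above_def by simp
  next
    case True
    define M' where "M' = M - {#Suc j#}"
    have M: "M = add_mset (Suc j) M'"
      using True by (simp add: M'_def)
    have "Suc j \<notin># M'"
      using distinct[rule_format, of "Suc j"] by (simp add: M count_eq_zero_iff[symmetric])
    with parts have "\<forall>x\<in>#M'. Suc j < x"
      by (metis M Suc_lessI add_mset_commute insert_DiffM insert_noteq_member)
    moreover have "\<forall>x. count M' x \<le> 1"
      using distinct by (metis M count_add_mset le_SucI not_less_eq_eq)
    ultimately have "M' \<in> distinct_partitions_above (Suc j) (n - Suc j)"
      using sum by (simp add: distinct_partitions_above_def M)
    moreover have "Suc j \<le> n"
      using True member_le_sum_mset sum by blast
    ultimately show ?thesis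
      by (simp add: M)
  qed
next
  fix M assume "M \<in> ?D' \<union> ?E"
  then consider "M \<in> ?D'"
    | M' where "M = add_mset (Suc j) M'" "M' \<in> distinct_partitions_above (Suc j) (n - Suc j)"
        "Suc j \<le> n"
    by (cases "Suc j \<le> n") auto
  then show "M \<in> ?D"
  proof cases
    case 1
    then show ?thesis
      unfolding distinct_partitions_above_def by auto
  next
    case (2 M')
    then have "count M' (Suc j) = 0"
      unfolding distinct_partitions_above_def using not_in_iff by fastforce
    with 2 show ?thesis
      unfolding distinct_partitions_above_def by auto
  qed
qed

lemma p_d_above_Suc:
  "p_d_above j n =
     p_d_above (Suc j) n + (if Suc j \<le> n then p_d_above (Suc j) (n - Suc j) else 0)"
proof -
  have "distinct_partitions_above (Suc j) n \<inter> add_mset (Suc j) ` X = {}" for X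
    by (auto simp: distinct_partitions_above_def)
  then show ?thesis
    unfolding p_d_above_def distinct_partitions_above_Suc_split[of j n]
    by (simp add: card_Un_disjoint finite_distinct_partitions_above card_image inj_on_def)
qed

lemma Min_add_replicate_mset:
  assumes "0 < k" "\<forall>x\<in>#M. m < x"
  shows "Min (set_mset (M + replicate_mset k m)) = m"
  using assms by (intro Min_eqI) (auto simp: less_imp_le)

lemma less_div_iff_mult_Suc_le: "0 < k \<Longrightarrow> j < n div k \<longleftrightarrow> k * Suc j \<le> n"
  by (metis Suc_le_eq less_eq_div_iff_mult_less_eq mult.commute)

lemma sptk_d_set_eq:
  assumes "0 < k"
  shows "{M \<in> partitions n. M \<noteq> {#} \<and> count M (Min (set_mset M)) = k \<and>
            (\<forall>x. x \<noteq> Min (set_mset M) \<longrightarrow> count M x \<le> 1)}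
       = (\<Union>j<n div k. (\<lambda>M'. M' + replicate_mset k (Suc j)) `
            distinct_partitions_above (Suc j) (n - k * Suc j))"
  (is "?S = ?U")
proof (intro equalityI subsetI)
  fix M assume "M \<in> ?S"
  then have pos: "\<forall>x\<in>#M. 0 < x" and sum: "sum_mset M = n" and "M \<noteq> {#}"
    and min: "count M (Min (set_mset M)) = k"
    and distinct: "\<forall>x. x \<noteq> Min (set_mset M) \<longrightarrow> count M x \<le> 1"
    unfolding partitions_def by auto
  define m where "m = Min (set_mset M)"
  define M' where "M' = filter_mset (\<lambda>x. x \<noteq> m) M"
  have "m \<in># M" and min_le: "\<forall>x\<in>#M. m \<le> x"
    using \<open>M \<noteq> {#}\<close> by (auto simp: m_def)
  then obtain j where j: "m = Suc j"
    using pos gr0_implies_Suc by blast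
  have M: "M = M' + replicate_mset k m"
    by (rule multiset_eqI) (simp add: M'_def min[folded m_def])
  have "sum_mset M' + k * m = n"
    using sum by (simp add: M)
  then have "M' \<in> distinct_partitions_above m (n - k * m)" and "k * m \<le> n"
    using min_le distinct
    unfolding distinct_partitions_above_def M'_def m_def by (auto simp: le_neq_implies_less)
  then show "M \<in> ?U"
    using less_div_iff_mult_Suc_le[OF assms] by (auto simp: M j)
next
  fix M assume "M \<in> ?U"
  then obtain j M' where j: "j < n div k" and M': "M' \<in> distinct_partitions_above (Suc j) (n - k * Suc j)"
    and M: "M = M' + replicate_mset k (Suc j)"
    by blast
  then have min: "Min (set_mset M) = Suc j"
    using Min_add_replicate_mset[OF assms] unfolding distinct_partitions_above_def by blast
  have "count M' (Suc j) = 0"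
    using M' unfolding distinct_partitions_above_def using not_in_iff by fastforce
  moreover have "k * Suc j \<le> n"
    using j less_div_iff_mult_Suc_le[OF assms] by blast
  ultimately show "M \<in> ?S"
    using M' assms min unfolding partitions_def distinct_partitions_above_def
    by (auto simp: M dest: less_trans[OF zero_less_Suc])
qed

lemma sptk_d_eq_sum:
  assumes "0 < k"
  shows "sptk_d k n = (\<Sum>j<n div k. p_d_above (Suc j) (n - k * Suc j))"
proof -
  let ?F = "\<lambda>j. (\<lambda>M'. M' + replicate_mset k (Suc j)) ` distinct_partitions_above (Suc j) (n - k * Suc j)"
  have min: "Min (set_mset M) = Suc j" if "M \<in> ?F j" for M j
    using that Min_add_replicate_mset[OF assms] unfolding distinct_partitions_above_def by blast
  have "sptk_d k n = card (\<Union>j<n div k. ?F j)"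
    unfolding sptk_d_def sptk_d_set_eq[OF assms] ..
  also have "\<dots> = (\<Sum>j<n div k. card (?F j))"
  proof (rule card_UN_disjoint)
    show "\<forall>i\<in>{..<n div k}. \<forall>j\<in>{..<n div k}. i \<noteq> j \<longrightarrow> ?F i \<inter> ?F j = {}"
      using min by (metis Suc_inject disjoint_iff)
  qed (simp_all add: finite_distinct_partitions_above)
  also have "\<dots> = (\<Sum>j<n div k. p_d_above (Suc j) (n - k * Suc j))"
    by (simp add: p_d_above_def card_image inj_on_def)
  finally show ?thesis .
qed

lemma sptk_d_Suc_add:
  assumes "0 < k" "k \<le> n"
  shows "sptk_d (Suc k) n + sptk_d k n = p_d (n - k) + sptk_d k (n - k)"
proof -
  have step: "p_d_above j (n - k * Suc j) = p_d_above (Suc j) (n - k * Suc j) +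
      (if Suc k * Suc j \<le> n then p_d_above (Suc j) (n - Suc k * Suc j) else 0)" for j
  proof -
    have "Suc j \<le> n - k * Suc j \<longleftrightarrow> Suc k * Suc j \<le> n"
      "n - k * Suc j - Suc j = n - Suc k * Suc j"
      by auto
    then show ?thesis
      using p_d_above_Suc[of j "n - k * Suc j"] by simp
  qed
  have range: "{j \<in> {..<n div k}. Suc k * Suc j \<le> n} = {..<n div Suc k}"
    using less_div_iff_mult_Suc_le[OF assms(1)] less_div_iff_mult_Suc_le[of "Suc k"] by auto
  have "(\<Sum>j<n div k. if Suc k * Suc j \<le> n then p_d_above (Suc j) (n - Suc k * Suc j) else 0)
      = sptk_d (Suc k) n"
    unfolding sptk_d_eq_sum[OF zero_less_Suc] range[symmetric]
    by (rule sum.inter_filter[symmetric]) simp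
  then have "(\<Sum>j<n div k. p_d_above j (n - k * Suc j)) = sptk_d k n + sptk_d (Suc k) n"
    unfolding step sum.distrib sptk_d_eq_sum[OF assms(1)] by simp
  moreover have "n div k = Suc ((n - k) div k)"
    using assms by (simp add: le_div_geq)
  then have "(\<Sum>j<n div k. p_d_above j (n - k * Suc j)) = p_d (n - k) + sptk_d k (n - k)"
    unfolding sptk_d_eq_sum[OF assms(1)] p_d_eq_p_d_above_0
    by (simp add: sum.lessThan_Suc_shift diff_diff_add del: sum.lessThan_Suc)
  ultimately show ?thesis
    by simp
qed

lemma sptk_d_1:
  assumes "0 < n"
  shows "sptk_d 1 n = p_d n"
proof -
  have "M \<noteq> {#}" if "M \<in> partitions n" for M
    using that assms by (auto simp: partitions_def)
  then have "(M \<noteq> {#} \<and> count M (Min (set_mset M)) = 1 \<and>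
      (\<forall>x. x \<noteq> Min (set_mset M) \<longrightarrow> count M x \<le> 1)) \<longleftrightarrow> (\<forall>x. count M x \<le> 1)"
    if "M \<in> partitions n" for M
    using that by (metis Min_in_mset count_greater_eq_one_iff dual_order.antisym)
  then show ?thesis
    unfolding sptk_d_def p_d_def by (intro arg_cong[where f = card] Collect_cong) blast
qed

lemma sptk_d_2:
  assumes "2 \<le> n"
  shows "int (sptk_d 2 n) = 2 * int (p_d (n - 1)) - int (p_d n)"
  using sptk_d_Suc_add[of 1 n] sptk_d_1[of n] sptk_d_1[of "n - 1"] assms
  by (simp add: numeral_2_eq_2)

lemma sptk_d_3:
  assumes "4 \<le> n"
  shows "int (sptk_d 3 n) = 2 * int (p_d (n - 3)) - 2 * int (p_d (n - 1)) + int (p_d n)"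
proof -
  have "sptk_d 3 n + sptk_d 2 n = p_d (n - 2) + sptk_d 2 (n - 2)"
    using sptk_d_Suc_add[of 2 n] assms by (simp add: numeral_3_eq_3)
  moreover have "int (sptk_d 2 (n - 2)) = 2 * int (p_d (n - 3)) - int (p_d (n - 2))"
    using sptk_d_2[of "n - 2"] assms by simp
  ultimately show ?thesis
    using sptk_d_2[of n] assms by simp
qed

theorem corollary5:
  shows "(\<forall>n::nat. n \<ge> 2 \<longrightarrow>
            int (sptk_d 2 n) = 2 * int (p_d (n - 1)) - int (p_d n))
       \<and> (\<forall>n::nat. n \<ge> 4 \<longrightarrow>
            int (sptk_d 3 n) = 2 * int (p_d (n - 3)) - 2 * int (p_d (n - 1)) + int (p_d n))"
  using sptk_d_2 sptk_d_3 by blast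

end
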